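(* Let $t,k$ be integers with $3\le k\le t$. A sequence $l=(l_1,\dots,l_k)$ with entries in $\{1,\dots,t\}$ maximizes $c(l)$ among all such sequences if and only if: 1. the number $v^*$ of distinct treatments occurring in $l$ maximizes $f(v)$ over $v\in\{2,\dots,t\}$; 2. each treatment occurring in $l$ occurs either $n_-=\lfloor k/v^*\rfloor$ times or $n_+=n_-+1$ times; 3. the number of treatments occurring $n_+$ times in $l$ is $v_+=k-v^*\lfloor k/v^*\rfloor$; 4. the number of treatments occurring $n_-$ times in $l$ is $v_-=v^*-v_+$; 5. for every treatment occurring in $l$, all its occurrences are side by side (consecutive positions, cyclically). Moreover, the maximum value is $f(v^* )$, and $f(v^* )\le k-\sqrt{2k}$, with equality if $\sqrt{2k}$ is an integer.
   Context: For a sequence $l=(l_1,\dots,l_k)$ with entries in $\{1,\dots,t\}$, put $l_0=l_k$; $n_i$ is the number of occurrences of treatment $i$ in $l$ and $m_i$ is the number of $j\in\{1,\dots,k\}$ with $l_{j-1}=l_j=i$ (the sequence is read circularly). Define $c(l)=\frac12\big(k-\frac2k\sum_{i=1}^t n_i^2+\sum_{i=1}^t m_i\big)$ and, for positive integers $v$, $f(v)=-1+k-\frac v2-\big(2-\frac vk\big)\lfloor k/v\rfloor+\frac vk\lfloor k/v\rfloor^2$, where $\lfloor x\rfloor$ is the integer part of $x$. (In the paper, $c(l)$ is the trace of the per-block information bound for total effects $\tau+\lambda$ in the circular block model $\mathbb{E}(Y_{i,j})=\beta_i+\tau_{d(i,j)}+\lambda_{d(i,j-1)}$.) *)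

theory Defs
  imports Complex_Main
begin

text \<open>A sequence l = (l_1,...,l_k) is represented as a list; position j (0-based) has
  cyclic predecessor (j + k - 1) mod k, so that l_0 = l_k.\<close>

definition admissible :: "nat \<Rightarrow> nat \<Rightarrow> nat list \<Rightarrow> bool" where
  "admissible t k l \<longleftrightarrow> length l = k \<and> set l \<subseteq> {1..t}"

definition n_occ :: "nat list \<Rightarrow> nat \<Rightarrow> nat" where
  "n_occ l i = count_list l i"

definition m_occ :: "nat list \<Rightarrow> nat \<Rightarrow> nat" where
  "m_occ l i = card {j \<in> {0..<length l}.
      l ! ((j + length l - 1) mod length l) = i \<and> l ! j = i}"

definition c_val :: "nat \<Rightarrow> nat list \<Rightarrow> real" where
  "c_val t l = (1/2) * (real (length l)
      - (2 / real (length l)) * (\<Sum>i\<in>{1..t}. (real (n_occ l i))^2)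
      + (\<Sum>i\<in>{1..t}. real (m_occ l i)))"

definition f_val :: "nat \<Rightarrow> nat \<Rightarrow> real" where
  "f_val k v = -1 + real k - real v / 2
      - (2 - real v / real k) * of_int \<lfloor>real k / real v\<rfloor>
      + (real v / real k) * (of_int \<lfloor>real k / real v\<rfloor>)^2"

definition cyclically_consecutive :: "nat list \<Rightarrow> nat \<Rightarrow> bool" where
  "cyclically_consecutive l i \<longleftrightarrow>
     (\<exists>s len. {j \<in> {0..<length l}. l ! j = i} = {(s + r) mod length l | r. r < len})"

end

theory Submission
  imports Defs
begin

text \<open>Call position j a run start of treatment i if l_j = i but the cyclic predecessor of j
  carries another treatment, and let s_i be the number of run starts of i. Then n_i = m_i + s_i,
  hence c(l) = k/2 - (1/k) sum n_i^2 + (k - sum s_i)/2. If v >= 2 treatments occur, every one of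
  them has s_i >= 1, with equality iff its occurrences are side by side; and with a = floor(k/v),
  sum n_i^2 = (2a+1)k - va(a+1) + sum (n_i - a)(n_i - a - 1), where each summand of the last sum
  is nonnegative and vanishes iff n_i is a or a+1. So c(l) <= f(v), with equality exactly for
  balanced designs with contiguous treatments; sorting a balanced list gives one for every
  2 <= v <= k, while a single treatment only gives c(l) = 0 < f(k). Finally
  f(v) <= k - v/2 - k/v <= k - sqrt(2k), with equality at v = sqrt(2k) when that is an integer.\<close>

definition run_starts :: "nat list \<Rightarrow> nat \<Rightarrow> nat set" where
  "run_starts l i = {j \<in> {0..<length l}.
      l ! ((j + length l - 1) mod length l) \<noteq> i \<and> l ! j = i}"

lemma n_occ_eq_m_occ_plus_run_starts: "n_occ l i = m_occ l i + card (run_starts l i)"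
proof -
  have "n_occ l i = card {j. j < length l \<and> l ! j = i}"
    unfolding n_occ_def count_list_eq_length_filter length_filter_conv_card by metis
  also have "{j. j < length l \<and> l ! j = i} =
     {j \<in> {0..<length l}. l ! ((j + length l - 1) mod length l) = i \<and> l ! j = i} \<union> run_starts l i"
    unfolding run_starts_def by auto
  also have "card \<dots> = m_occ l i + card (run_starts l i)"
    unfolding m_occ_def run_starts_def by (rule card_Un_disjoint) auto
  finally show ?thesis .
qed

lemma cyclic_pred_Suc:
  fixes k :: nat
  assumes "0 < k"
  shows "((s + Suc r) mod k + k - 1) mod k = (s + r) mod k"
proof -
  have "(s + Suc r) mod k + k - 1 = (s + Suc r) mod k + (k - 1)"
    using assms by simp
  then have "((s + Suc r) mod k + k - 1) mod k = (s + Suc r + (k - 1)) mod k"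
    by (simp add: mod_add_left_eq)
  also have "s + Suc r + (k - 1) = s + r + k"
    using assms by simp
  finally show ?thesis
    by simp
qed

lemma cyclic_pred_pos:
  fixes k :: nat
  assumes "0 < j" "j < k"
  shows "(j + k - 1) mod k = j - 1"
proof -
  have "(j + k - 1) mod k = (j - 1 + k) mod k"
    using assms(1) by (metis Nat.add_diff_assoc2 Suc_leI One_nat_def)
  also have "\<dots> = j - 1"
    using assms(2) by simp
  finally show ?thesis .
qed

lemma mod_add_cyclic_offset:
  fixes k :: nat
  assumes "p < k" "q < k"
  shows "(p + (q + k - p) mod k) mod k = q"
proof -
  have "(p + (q + k - p) mod k) mod k = (p + (q + k - p)) mod k"
    by (simp add: mod_add_right_eq)
  also have "p + (q + k - p) = q + k"
    using assms by simp
  finally show ?thesis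
    using assms by simp
qed

lemma run_extends_backwards:
  assumes "0 < length l" "n \<le> N" "l ! ((s + N) mod length l) = i"
    and "\<And>r. n \<le> r \<Longrightarrow> r < N \<Longrightarrow> (s + Suc r) mod length l \<notin> run_starts l i"
  shows "l ! ((s + n) mod length l) = i"
  using assms(2,3)
proof (induction n rule: inc_induct)
  case (step r)
  then have "l ! (((s + Suc r) mod length l + length l - 1) mod length l) = i"
    using assms(1,4) unfolding run_starts_def by auto
  then show ?case
    using cyclic_pred_Suc[OF assms(1)] by simp
qed

lemma obtain_nth_neq:
  assumes "2 \<le> card (set l)"
  obtains q where "q < length l" "l ! q \<noteq> i"
proof -
  have "\<not> set l \<subseteq> {i}"
    using assms card_mono[of "{i}" "set l"] by auto
  then obtain x where "x \<in> set l" "x \<noteq> i"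
    by auto
  then show ?thesis
    using that by (metis in_set_conv_nth)
qed

lemma card_run_starts_pos:
  assumes "i \<in> set l" "2 \<le> card (set l)"
  shows "1 \<le> card (run_starts l i)"
proof (rule ccontr)
  assume "\<not> 1 \<le> card (run_starts l i)"
  moreover have "finite (run_starts l i)"
    unfolding run_starts_def by simp
  ultimately have none: "run_starts l i = {}"
    by (simp add: not_less_eq_eq)
  obtain p where p: "p < length l" "l ! p = i"
    using assms(1) by (metis in_set_conv_nth)
  obtain q where q: "q < length l" "l ! q \<noteq> i"
    using obtain_nth_neq[OF assms(2)] .
  have offset: "(q + length l - p) mod length l < length l"
    using p(1) by (intro mod_less_divisor) linarith
  have "l ! ((p + (q + length l - p) mod length l) mod length l) = i"
    by (rule run_extends_backwards[where N = "length l"]) (use p none offset in auto)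
  then show False
    using q p mod_add_cyclic_offset[OF p(1) q(1)] by simp
qed

lemma card_run_starts_le_1_if_cyclically_consecutive:
  assumes "cyclically_consecutive l i"
  shows "card (run_starts l i) \<le> 1"
proof (cases "l = []")
  case False
  let ?k = "length l"
  have k: "0 < ?k"
    using False by simp
  obtain s len where P: "{j \<in> {0..<?k}. l ! j = i} = {(s + r) mod ?k | r. r < len}"
    using assms unfolding cyclically_consecutive_def by blast
  have "run_starts l i \<subseteq> {s mod ?k}"
  proof
    fix j
    assume j: "j \<in> run_starts l i"
    then have "j \<in> {j \<in> {0..<?k}. l ! j = i}"
      unfolding run_starts_def by simp
    then obtain r where r: "r < len" "j = (s + r) mod ?k"
      using P by auto
    show "j \<in> {s mod ?k}"
    proof (cases r)
      case (Suc r')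
      then have "(j + ?k - 1) mod ?k \<in> {(s + r) mod ?k | r. r < len}"
        using r cyclic_pred_Suc[OF k] by auto
      then have "l ! ((j + ?k - 1) mod ?k) = i"
        using P by blast
      then show ?thesis
        using j unfolding run_starts_def by simp
    qed (use r in simp)
  qed
  then show ?thesis
    using card_mono[of "{s mod ?k}"] by simp
qed (simp add: run_starts_def)

lemma mod_add_ne_self:
  fixes k :: nat
  assumes "s < k" "0 < d" "d < k"
  shows "(s + d) mod k \<noteq> s"
  using assms by (auto simp: mod_if)

lemma cyclically_consecutive_if_card_run_starts_eq_1:
  assumes "2 \<le> card (set l)" "card (run_starts l i) = 1"
  shows "cyclically_consecutive l i"
proof -
  let ?k = "length l"
  obtain s where S: "run_starts l i = {s}"
    using assms(2) by (rule card_1_singletonE)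
  then have s: "s < ?k" "l ! s = i"
    unfolding run_starts_def by auto
  then have k: "0 < ?k"
    by linarith
  obtain q where q: "q < ?k" "l ! q \<noteq> i"
    using obtain_nth_neq[OF assms(1)] .
  define Q where "Q r \<longleftrightarrow> l ! ((s + r) mod ?k) = i" for r
  define len where "len = (LEAST r. \<not> Q r)"
  have "\<not> Q ((q + ?k - s) mod ?k)"
    using q mod_add_cyclic_offset[OF s(1) q(1)] unfolding Q_def by simp
  then have not_Q_len: "\<not> Q len"
    unfolding len_def by (rule LeastI)
  (* Walking backwards from an occurrence of i, the run can only end at the unique run start s. *)
  have Q_down: "Q r" if "r \<le> N" "N < ?k" "Q N" for r N
    unfolding Q_def
  proof (rule run_extends_backwards[OF _ that(1)])
    show "l ! ((s + N) mod ?k) = i"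
      using that(3) unfolding Q_def .
    show "(s + Suc r') mod ?k \<notin> run_starts l i" if "r' < N" for r'
      using mod_add_ne_self[OF s(1), of "Suc r'"] that \<open>N < ?k\<close> S by simp
  qed (rule k)
  have "{j \<in> {0..<?k}. l ! j = i} = {(s + r) mod ?k | r. r < len}"
  proof (intro equalityI subsetI)
    fix j
    assume j: "j \<in> {j \<in> {0..<?k}. l ! j = i}"
    define r where "r = (j + ?k - s) mod ?k"
    have "(s + r) mod ?k = j" "r < ?k"
      using j k mod_add_cyclic_offset[OF s(1), of j] unfolding r_def by auto
    moreover have "r < len"
    proof (rule ccontr)
      assume "\<not> r < len"
      moreover have "Q r"
        using j \<open>(s + r) mod ?k = j\<close> unfolding Q_def by simp
      ultimately show False
        using Q_down[of len r] not_Q_len \<open>r < ?k\<close> by simp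
    qed
    ultimately show "j \<in> {(s + r) mod ?k | r. r < len}"
      by auto
  next
    fix j
    assume "j \<in> {(s + r) mod ?k | r. r < len}"
    then obtain r where r: "r < len" "j = (s + r) mod ?k"
      by auto
    then have "Q r"
      unfolding len_def using not_less_Least by blast
    moreover have "j < ?k"
      using r(2) k by simp
    ultimately show "j \<in> {j \<in> {0..<?k}. l ! j = i}"
      using r(2) unfolding Q_def by simp
  qed
  then show ?thesis
    unfolding cyclically_consecutive_def by blast
qed

lemma cyclically_consecutive_iff_card_run_starts:
  assumes "i \<in> set l" "2 \<le> card (set l)"
  shows "cyclically_consecutive l i \<longleftrightarrow> card (run_starts l i) = 1"
  using card_run_starts_le_1_if_cyclically_consecutive card_run_starts_pos[OF assms]
    cyclically_consecutive_if_card_run_starts_eq_1[OF assms(2)] by fastforce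

lemma card_run_starts_le_1_if_sorted:
  assumes "sorted l"
  shows "card (run_starts l i) \<le> 1"
proof -
  have ordered: False if x: "x \<in> run_starts l i" and y: "y \<in> run_starts l i" and "x < y" for x y
  proof -
    have y': "y < length l" "l ! y = i" "l ! ((y + length l - 1) mod length l) \<noteq> i"
      using y unfolding run_starts_def by auto
    have "l ! (y - 1) \<noteq> i"
      using y'(3) cyclic_pred_pos[of y "length l"] \<open>x < y\<close> y'(1) by simp
    moreover have "l ! x \<le> l ! (y - 1)" "l ! (y - 1) \<le> l ! y"
      using sorted_nth_mono[OF assms, of x "y - 1"] sorted_nth_mono[OF assms, of "y - 1" y]
        \<open>x < y\<close> y'(1) by auto
    moreover have "l ! x = i"
      using x unfolding run_starts_def by simp
    ultimately show False
      using y'(2) by simp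
  qed
  have "x = y" if "x \<in> run_starts l i" "y \<in> run_starts l i" for x y
    by (cases x y rule: linorder_cases) (use that ordered in blast)+
  moreover have "finite (run_starts l i)"
    unfolding run_starts_def by simp
  ultimately show ?thesis
    using card_le_Suc0_iff_eq by (metis One_nat_def)
qed

lemma sum_n_occ_eq_length:
  assumes "admissible t k l"
  shows "(\<Sum>i\<in>set l. real (n_occ l i)) = real k"
  using assms sum_count_set[of l "set l"] unfolding admissible_def n_occ_def
  by (metis finite_set of_nat_sum order_refl)

lemma c_val_eq_run_starts:
  assumes "admissible t k l"
  shows "c_val t l = real k / 2 - (\<Sum>i\<in>set l. (real (n_occ l i))^2) / real k
           + (real k - (\<Sum>i\<in>set l. real (card (run_starts l i)))) / 2"
proof -
  have len: "length l = k" and sub: "set l \<subseteq> {1..t}"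
    using assms unfolding admissible_def by auto
  have zero: "n_occ l i = 0" "card (run_starts l i) = 0" if "i \<notin> set l" for i
    using that n_occ_eq_m_occ_plus_run_starts[of l i] unfolding n_occ_def by auto
  have restrict: "(\<Sum>i\<in>{1..t}. g i) = (\<Sum>i\<in>set l. g i)" if "\<And>i. i \<notin> set l \<Longrightarrow> g i = 0"
    for g :: "nat \<Rightarrow> real"
    by (rule sum.mono_neutral_right) (use sub that in auto)
  have "(\<Sum>i\<in>set l. real (m_occ l i)) + (\<Sum>i\<in>set l. real (card (run_starts l i))) = real k"
    using sum_n_occ_eq_length[OF assms]
    by (simp add: n_occ_eq_m_occ_plus_run_starts sum.distrib)
  moreover have "(\<Sum>i\<in>{1..t}. real (m_occ l i)) = (\<Sum>i\<in>set l. real (m_occ l i))"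
    using zero n_occ_eq_m_occ_plus_run_starts by (intro restrict) simp
  moreover have "(\<Sum>i\<in>{1..t}. (real (n_occ l i))^2) = (\<Sum>i\<in>set l. (real (n_occ l i))^2)"
    using zero by (intro restrict) simp
  ultimately show ?thesis
    unfolding c_val_def len by (simp add: field_simps)
qed

lemma c_val_single_treatment:
  assumes "admissible t k l" "card (set l) = 1"
  shows "c_val t l = 0"
proof -
  obtain i where i: "set l = {i}"
    using assms(2) by (rule card_1_singletonE)
  then have all_i: "l ! j = i" if "j < length l" for j
    using that by (metis nth_mem singletonD)
  have k: "0 < k"
    using assms(1) i unfolding admissible_def by auto
  have pred_lt: "(j + length l - 1) mod length l < length l" if "j < length l" for j
    using that by (intro mod_less_divisor) linarith
  have "n_occ l i = k"
    using sum_n_occ_eq_length[OF assms(1)] i by simp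
  moreover have "run_starts l i = {}"
    unfolding run_starts_def using all_i pred_lt by auto
  ultimately show ?thesis
    unfolding c_val_eq_run_starts[OF assms(1)] i using k by (simp add: power2_eq_square)
qed

lemma sum_consecutive_products_nonneg:
  fixes g :: "'a \<Rightarrow> nat" and a :: nat
  shows "0 \<le> (\<Sum>i\<in>A. (real (g i) - real a) * (real (g i) - real a - 1))"
proof (intro sum_nonneg)
  fix i
  show "0 \<le> (real (g i) - real a) * (real (g i) - real a - 1)"
    by (cases "g i \<le> a") (auto intro: mult_nonpos_nonpos)
qed

lemma sum_consecutive_products_eq_0_iff:
  fixes g :: "'a \<Rightarrow> nat" and a :: nat
  assumes "finite A"
  shows "(\<Sum>i\<in>A. (real (g i) - real a) * (real (g i) - real a - 1)) = 0
           \<longleftrightarrow> (\<forall>i\<in>A. g i = a \<or> g i = a + 1)"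
proof -
  have "(real (g i) - real a) * (real (g i) - real a - 1) = 0 \<longleftrightarrow> g i = a \<or> g i = a + 1" for i
    by auto
  then show ?thesis
    using assms sum_consecutive_products_nonneg[of g a "{_}"]
    by (subst sum_nonneg_eq_0_iff) auto
qed

lemma sum_squares_eq_consecutive_products:
  fixes g :: "'a \<Rightarrow> nat" and a :: nat
  shows "(\<Sum>i\<in>A. (real (g i))^2) = (2 * real a + 1) * (\<Sum>i\<in>A. real (g i))
           - real (card A) * real a * (real a + 1)
           + (\<Sum>i\<in>A. (real (g i) - real a) * (real (g i) - real a - 1))"
proof -
  have "(\<Sum>i\<in>A. (real (g i))^2) = (\<Sum>i\<in>A. (2 * real a + 1) * real (g i) - real a * (real a + 1)
          + (real (g i) - real a) * (real (g i) - real a - 1))"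
    by (rule sum.cong) (auto simp: algebra_simps power2_eq_square)
  then show ?thesis
    by (simp add: sum.distrib sum_subtractf sum_distrib_left)
qed

lemma f_val_eq:
  fixes k v :: nat
  assumes "0 < k"
  defines "a \<equiv> nat \<lfloor>real k / real v\<rfloor>"
  shows "f_val k v = real k - real v / 2 - (2 * real a + 1) + real v * real a * (real a + 1) / real k"
proof -
  have "real a = of_int \<lfloor>real k / real v\<rfloor>"
    unfolding a_def by simp
  then show ?thesis
    unfolding f_val_def using assms by (simp add: field_simps power2_eq_square)
qed

lemma c_val_eq_f_val_minus_defects:
  assumes "admissible t k l" "0 < k"
  defines "v \<equiv> card (set l)"
  defines "a \<equiv> nat \<lfloor>real k / real v\<rfloor>"
  shows "c_val t l = f_val k v
    - (\<Sum>i\<in>set l. (real (n_occ l i) - real a) * (real (n_occ l i) - real a - 1)) / real k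
    - (\<Sum>i\<in>set l. real (card (run_starts l i)) - 1) / 2"
  unfolding c_val_eq_run_starts[OF assms(1)] f_val_eq[OF assms(2)] a_def[symmetric]
    sum_squares_eq_consecutive_products[where a = a] sum_n_occ_eq_length[OF assms(1)]
  using assms(2) by (simp add: sum_subtractf v_def field_simps)

lemma sum_run_start_excess_nonneg:
  assumes "2 \<le> card (set l)"
  shows "0 \<le> (\<Sum>i\<in>set l. real (card (run_starts l i)) - 1)"
  using card_run_starts_pos[OF _ assms] by (intro sum_nonneg) simp

lemma c_val_le_f_val:
  assumes "admissible t k l" "0 < k" "2 \<le> card (set l)"
  shows "c_val t l \<le> f_val k (card (set l))"
proof -
  define a where "a = nat \<lfloor>real k / real (card (set l))\<rfloor>"
  have "0 \<le> (\<Sum>i\<in>set l. (real (n_occ l i) - real a) * (real (n_occ l i) - real a - 1)) / real k"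
    by (intro divide_nonneg_nonneg sum_consecutive_products_nonneg) simp
  then show ?thesis
    using c_val_eq_f_val_minus_defects[OF assms(1,2)] sum_run_start_excess_nonneg[OF assms(3)]
    unfolding a_def by linarith
qed

lemma c_val_eq_f_val_iff:
  assumes "admissible t k l" "0 < k" "2 \<le> card (set l)"
  defines "a \<equiv> nat \<lfloor>real k / real (card (set l))\<rfloor>"
  shows "c_val t l = f_val k (card (set l)) \<longleftrightarrow>
           (\<forall>i\<in>set l. n_occ l i = a \<or> n_occ l i = a + 1)
           \<and> (\<forall>i\<in>set l. cyclically_consecutive l i)"
proof -
  define P where "P = (\<Sum>i\<in>set l. (real (n_occ l i) - real a) * (real (n_occ l i) - real a - 1))"
  define R where "R = (\<Sum>i\<in>set l. real (card (run_starts l i)) - 1)"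
  have "0 \<le> P"
    unfolding P_def by (rule sum_consecutive_products_nonneg)
  moreover have "0 \<le> R"
    unfolding R_def by (rule sum_run_start_excess_nonneg[OF assms(3)])
  moreover have "c_val t l = f_val k (card (set l)) - P / real k - R / 2"
    unfolding P_def R_def a_def by (rule c_val_eq_f_val_minus_defects[OF assms(1,2)])
  ultimately have "c_val t l = f_val k (card (set l)) \<longleftrightarrow> P = 0 \<and> R = 0"
    using assms(2) by (smt (verit) divide_nonneg_pos divide_eq_0_iff of_nat_0_less_iff)
  also have "P = 0 \<longleftrightarrow> (\<forall>i\<in>set l. n_occ l i = a \<or> n_occ l i = a + 1)"
    unfolding P_def by (rule sum_consecutive_products_eq_0_iff) simp
  also have "R = 0 \<longleftrightarrow> (\<forall>i\<in>set l. cyclically_consecutive l i)"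
    unfolding R_def using card_run_starts_pos[OF _ assms(3)]
      cyclically_consecutive_iff_card_run_starts[OF _ assms(3)]
    by (subst sum_nonneg_eq_0_iff) force+
  finally show ?thesis .
qed

fun blocks :: "(nat \<Rightarrow> nat) \<Rightarrow> nat \<Rightarrow> nat list" where
  "blocks sz 0 = []"
| "blocks sz (Suc n) = blocks sz n @ replicate (sz (Suc n)) (Suc n)"

lemma length_blocks: "length (blocks sz n) = (\<Sum>i\<in>{1..n}. sz i)"
  by (induction n) simp_all

lemma set_blocks_subset: "set (blocks sz n) \<subseteq> {1..n}"
  by (induction n) auto

lemma count_list_blocks: "count_list (blocks sz n) i = (if 1 \<le> i \<and> i \<le> n then sz i else 0)"
proof -
  have replicate: "count_list (replicate m x) i = (if i = x then m else 0)" for m x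
    by (induction m) auto
  show ?thesis
    by (induction n) (auto simp: replicate)
qed

lemma set_blocks:
  assumes "\<And>i. 1 \<le> i \<Longrightarrow> i \<le> n \<Longrightarrow> 0 < sz i"
  shows "set (blocks sz n) = {1..n}"
proof (intro equalityI subsetI)
  fix i
  assume "i \<in> {1..n}"
  then have "count_list (blocks sz n) i \<noteq> 0"
    using assms count_list_blocks[of sz n i] by auto
  then show "i \<in> set (blocks sz n)"
    by (simp add: count_list_0_iff)
qed (use set_blocks_subset in blast)

lemma sorted_blocks: "sorted (blocks sz n)"
proof (induction n)
  case (Suc n)
  then show ?case
    using set_blocks_subset[of sz n] by (auto simp: sorted_append)
qed simp

lemma exists_c_val_eq_f_val:
  assumes "2 \<le> v" "v \<le> k" "k \<le> t"
  shows "\<exists>l. admissible t k l \<and> card (set l) = v \<and> c_val t l = f_val k v"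
proof -
  define a where "a = k div v"
  define sz where "sz i = (if i \<le> k mod v then a + 1 else a)" for i
  define l where "l = blocks sz v"
  have a: "1 \<le> a"
    using assms div_le_mono[of v k v] unfolding a_def by simp
  have "(\<Sum>i\<in>{1..v}. sz i) = (\<Sum>i\<in>{1..v}. a + (if i \<le> k mod v then 1 else 0))"
    unfolding sz_def by (rule sum.cong) auto
  also have "\<dots> = v * a + card {i \<in> {1..v}. i \<le> k mod v}"
    by (simp add: sum.distrib sum.If_cases Int_def conj_commute)
  also have "{i \<in> {1..v}. i \<le> k mod v} = {1..k mod v}"
  proof -
    have "k mod v < v"
      using assms by simp
    then show ?thesis
      by auto
  qed
  finally have len: "length l = k"
    unfolding l_def length_blocks a_def by simp
  have set_l: "set l = {1..v}"
    unfolding l_def using a by (intro set_blocks) (auto simp: sz_def)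
  then have adm: "admissible t k l"
    unfolding admissible_def using len assms by auto
  have card: "card (set l) = v"
    using set_l by simp
  have "nat \<lfloor>real k / real v\<rfloor> = a"
    unfolding a_def by (metis floor_divide_of_nat_eq nat_int of_nat_nat)
  moreover have "\<forall>i\<in>set l. n_occ l i = a \<or> n_occ l i = a + 1"
    unfolding n_occ_def l_def using count_list_blocks[of sz v] set_l by (auto simp: sz_def l_def)
  moreover have "\<forall>i\<in>set l. cyclically_consecutive l i"
    using card_run_starts_le_1_if_sorted[OF sorted_blocks] card_run_starts_pos card assms
      cyclically_consecutive_if_card_run_starts_eq_1 unfolding l_def by (metis le_antisym)
  ultimately have "c_val t l = f_val k v"
    using c_val_eq_f_val_iff[OF adm] card assms by simp
  then show ?thesis
    using adm card by blast
qed

lemma f_val_self: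
  assumes "0 < k"
  shows "f_val k k = real k / 2 - 1"
  using assms unfolding f_val_def by simp

lemma f_val_if_k_less:
  assumes "k < v"
  shows "f_val k v = real k - 1 - real v / 2"
proof -
  have "\<lfloor>real k / real v\<rfloor> = 0"
    using assms by (simp add: floor_divide_of_nat_eq)
  then show ?thesis
    unfolding f_val_def by simp
qed

lemma f_val_le_sqrt_bound:
  assumes "0 < k" "0 < v"
  shows "f_val k v \<le> real k - sqrt (2 * real k)"
proof -
  define a where "a = real (nat \<lfloor>real k / real v\<rfloor>)"
  have pos: "real k > 0" "real v > 0"
    using assms by auto
  have "a = of_int \<lfloor>real k / real v\<rfloor>"
    unfolding a_def by simp
  then have "a \<le> real k / real v" "real k / real v < a + 1"
    by linarith+
  then have "real v * a \<le> real k" "real k < real v * (a + 1)"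
    using pos by (simp_all add: field_simps)
  then have "0 \<le> (real k - real v * a) * (real v * (a + 1) - real k) / (real k * real v)"
    using pos by simp
  also have "\<dots> = (2 * a + 1) - real v * a * (a + 1) / real k - real k / real v"
    using pos by (simp add: field_simps)
  finally have "f_val k v \<le> real k - real v / 2 - real k / real v"
    unfolding f_val_eq[OF assms(1)] a_def by simp
  moreover have "sqrt (2 * real k) \<le> real v / 2 + real k / real v"
  proof (rule real_le_lsqrt)
    have "(real v / 2 + real k / real v)^2 = (real v / 2 - real k / real v)^2 + 2 * real k"
      using pos by (simp add: power2_eq_square field_simps)
    then show "2 * real k \<le> (real v / 2 + real k / real v)^2"
      by simp
  qed (use pos in simp_all)
  ultimately show ?thesis
    by simp
qed

lemma f_val_at_sqrt:
  assumes "3 \<le> k" "sqrt (2 * real k) = real s"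
  shows "f_val k s = real k - real s" and "2 \<le> s" and "s \<le> k"
proof -
  have "real (s * s) = real (2 * k)"
    using assms(2) real_sqrt_pow2[of "2 * real k"] by (simp add: power2_eq_square)
  then have ss: "s * s = 2 * k"
    by (metis of_nat_eq_iff)
  then have "even s"
    by (metis even_mult_iff even_numeral)
  then obtain m where m: "s = 2 * m"
    by blast
  have k: "k = 2 * m * m"
    using ss m by simp
  have "2 \<le> m"
  proof (rule ccontr)
    assume "\<not> 2 \<le> m"
    then have "m * m \<le> 1"
      using mult_le_mono[of m 1 m 1] by simp
    then show False
      using k assms(1) by simp
  qed
  then show "2 \<le> s" and "s \<le> k"
    using m k by simp_all
  have "real k / real s = real m"
    using k m \<open>2 \<le> m\<close> by (simp add: field_simps)
  then have "nat \<lfloor>real k / real s\<rfloor> = m"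
    by simp
  then have "f_val k s = real k - real s / 2 - (2 * real m + 1) + real s * real m * (real m + 1) / real k"
    using f_val_eq[of k s] assms(1) by simp
  moreover have "real s * real m * (real m + 1) / real k = real m + 1"
    using k m \<open>2 \<le> m\<close> by (simp add: field_simps)
  ultimately show "f_val k s = real k - real s"
    using k m by simp
qed

lemma card_balanced_classes:
  fixes g :: "'a \<Rightarrow> nat"
  assumes "finite A" "\<forall>i\<in>A. g i = a \<or> g i = a + 1" "(\<Sum>i\<in>A. g i) = k"
  shows "card {i \<in> A. g i = a + 1} = k - card A * a"
    and "card {i \<in> A. g i = a} = card A - (k - card A * a)"
proof -
  have "(\<Sum>i\<in>A. g i) = (\<Sum>i\<in>A. a + (if g i = a + 1 then 1 else 0))"
    using assms(2) by (intro sum.cong) auto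
  also have "\<dots> = card A * a + card {i \<in> A. g i = a + 1}"
    using assms(1) by (simp add: sum.distrib sum.If_cases Int_def conj_commute)
  finally show upper: "card {i \<in> A. g i = a + 1} = k - card A * a"
    using assms(3) by simp
  have "A = {i \<in> A. g i = a} \<union> {i \<in> A. g i = a + 1}"
    using assms(2) by auto
  moreover have "card ({i \<in> A. g i = a} \<union> {i \<in> A. g i = a + 1})
      = card {i \<in> A. g i = a} + card {i \<in> A. g i = a + 1}"
    using assms(1) by (intro card_Un_disjoint) auto
  ultimately have "card A = card {i \<in> A. g i = a} + card {i \<in> A. g i = a + 1}"
    by simp
  then show "card {i \<in> A. g i = a} = card A - (k - card A * a)"
    using upper by simp
qed

lemma card_set_admissible:
  assumes "admissible t k l" "0 < k"
  shows "card (set l) \<in> {1..t}"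
proof -
  have "set l \<noteq> {}"
    using assms unfolding admissible_def by auto
  moreover have "card (set l) \<le> t"
    using assms(1) card_mono[of "{1..t}" "set l"] unfolding admissible_def by auto
  ultimately show ?thesis
    by (simp add: Suc_le_eq card_gt_0_iff)
qed

definition f_maximizer :: "nat \<Rightarrow> nat \<Rightarrow> nat \<Rightarrow> bool" where
  "f_maximizer t k v \<longleftrightarrow> v \<in> {2..t} \<and> (\<forall>u\<in>{2..t}. f_val k u \<le> f_val k v)"

lemma f_maximizer_exists:
  assumes "2 \<le> t"
  obtains v where "f_maximizer t k v"
proof -
  have fin: "finite (f_val k ` {2..t})" and ne: "f_val k ` {2..t} \<noteq> {}"
    using assms by auto
  obtain v where v: "v \<in> {2..t}" "f_val k v = Max (f_val k ` {2..t})"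
    using Max_in[OF fin ne] by (metis imageE)
  have "f_val k u \<le> f_val k v" if "u \<in> {2..t}" for u
    unfolding v(2) using fin that by (intro Max_ge) auto
  then show thesis
    using that v(1) unfolding f_maximizer_def by blast
qed

lemma f_maximizer_le:
  assumes "2 \<le> k" "k \<le> t" "f_maximizer t k v"
  shows "v \<le> k"
proof (rule ccontr)
  assume "\<not> v \<le> k"
  then have "f_val k v < f_val k k"
    using f_val_if_k_less f_val_self assms(1) by simp
  moreover have "f_val k k \<le> f_val k v"
    using assms unfolding f_maximizer_def by simp
  ultimately show False
    by simp
qed

lemma f_maximizer_pos:
  assumes "3 \<le> k" "k \<le> t" "f_maximizer t k v"
  shows "0 < f_val k v"
proof -
  have "f_val k k \<le> f_val k v"
    using assms unfolding f_maximizer_def by simp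
  then show ?thesis
    using f_val_self[of k] assms(1) by simp
qed

lemma c_val_le_max_f_val:
  assumes "3 \<le> k" "k \<le> t" "f_maximizer t k v" "admissible t k l"
  shows "c_val t l \<le> f_val k v"
proof (cases "card (set l) = 1")
  case True
  then show ?thesis
    using c_val_single_treatment[OF assms(4)] f_maximizer_pos[OF assms(1-3)] by simp
next
  case False
  then have "card (set l) \<in> {2..t}"
    using card_set_admissible[OF assms(4)] assms(1) by auto
  then show ?thesis
    using c_val_le_f_val[OF assms(4)] assms(1,3) unfolding f_maximizer_def by force
qed

lemma exists_c_val_eq_max_f_val:
  assumes "3 \<le> k" "k \<le> t" "f_maximizer t k v"
  shows "\<exists>l. admissible t k l \<and> c_val t l = f_val k v"
  using exists_c_val_eq_f_val[of v k t] f_maximizer_le[of k t v] assms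
  unfolding f_maximizer_def by auto

lemma c_val_eq_max_f_val_iff:
  assumes "3 \<le> k" "k \<le> t" "f_maximizer t k vs" "admissible t k l"
  defines "v \<equiv> card (set l)"
  defines "a \<equiv> nat \<lfloor>real k / real v\<rfloor>"
  shows "c_val t l = f_val k vs \<longleftrightarrow>
     v \<in> {2..t} \<and> (\<forall>u\<in>{2..t}. f_val k u \<le> f_val k v)
     \<and> (\<forall>i\<in>set l. n_occ l i = a \<or> n_occ l i = a + 1)
     \<and> card {i \<in> set l. n_occ l i = a + 1} = k - v * a
     \<and> card {i \<in> set l. n_occ l i = a} = v - (k - v * a)
     \<and> (\<forall>i\<in>set l. cyclically_consecutive l i)"
    (is "_ \<longleftrightarrow> ?range \<and> ?maximal \<and> ?balanced \<and> ?upper \<and> ?lower \<and> ?contiguous")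
proof
  assume c: "c_val t l = f_val k vs"
  have "v \<noteq> 1"
    using c c_val_single_treatment[OF assms(4)] f_maximizer_pos[OF assms(1-3)] v_def by auto
  then have v: ?range
    using card_set_admissible[OF assms(4)] assms(1) v_def by auto
  then have "c_val t l \<le> f_val k v" "f_val k v \<le> f_val k vs"
    using c_val_le_f_val[OF assms(4)] assms(1,3) unfolding v_def f_maximizer_def by auto
  then have f: "c_val t l = f_val k v" "f_val k v = f_val k vs"
    using c by simp_all
  then have ?maximal
    using assms(3) unfolding f_maximizer_def by simp
  moreover have ?balanced ?contiguous
    using c_val_eq_f_val_iff[OF assms(4)] f(1) v assms(1) unfolding a_def v_def by simp_all
  moreover have "(\<Sum>i\<in>set l. n_occ l i) = k"
    using sum_n_occ_eq_length[OF assms(4)] by (metis of_nat_sum of_nat_eq_iff)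
  then have ?upper ?lower
    using card_balanced_classes[of "set l" "n_occ l" a k] \<open>?balanced\<close> unfolding v_def by simp_all
  ultimately show "?range \<and> ?maximal \<and> ?balanced \<and> ?upper \<and> ?lower \<and> ?contiguous"
    using v by blast
next
  assume h: "?range \<and> ?maximal \<and> ?balanced \<and> ?upper \<and> ?lower \<and> ?contiguous"
  then have "c_val t l = f_val k v"
    using c_val_eq_f_val_iff[OF assms(4)] assms(1) unfolding a_def v_def by simp
  moreover have "f_val k v = f_val k vs"
    using h assms(3) unfolding f_maximizer_def by fastforce
  ultimately show "c_val t l = f_val k vs"
    by simp
qed

lemma f_maximizer_at_sqrt:
  assumes "3 \<le> k" "k \<le> t" "f_maximizer t k v" "sqrt (2 * real k) \<in> \<nat>"
  shows "f_val k v = real k - sqrt (2 * real k)"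
proof -
  obtain s where s: "sqrt (2 * real k) = real s"
    using assms(4) by (blast elim: Nats_cases)
  have "s \<in> {2..t}"
    using f_val_at_sqrt(2,3)[OF assms(1) s] assms(2) by simp
  then have "f_val k s \<le> f_val k v"
    using assms(3) unfolding f_maximizer_def by blast
  moreover have "f_val k v \<le> real k - sqrt (2 * real k)"
    using f_val_le_sqrt_bound assms(1,3) unfolding f_maximizer_def by simp
  ultimately show ?thesis
    using f_val_at_sqrt(1)[OF assms(1) s] s by simp
qed

theorem proposition9:
  fixes t k :: nat
  assumes "3 \<le> k" and "k \<le> t"
  shows "(\<forall>l. admissible t k l \<longrightarrow>
           ((\<forall>l'. admissible t k l' \<longrightarrow> c_val t l' \<le> c_val t l) \<longleftrightarrow>
            (let vs = card (set l);
                 nm = nat \<lfloor>real k / real vs\<rfloor>;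
                 np = nm + 1;
                 vp = k - vs * nm;
                 vm = vs - vp
             in vs \<in> {2..t} \<and> (\<forall>v\<in>{2..t}. f_val k v \<le> f_val k vs)
              \<and> (\<forall>i\<in>set l. n_occ l i = nm \<or> n_occ l i = np)
              \<and> card {i \<in> set l. n_occ l i = np} = vp
              \<and> card {i \<in> set l. n_occ l i = nm} = vm
              \<and> (\<forall>i\<in>set l. cyclically_consecutive l i))))
       \<and> (\<forall>vs\<in>{2..t}. (\<forall>v\<in>{2..t}. f_val k v \<le> f_val k vs) \<longrightarrow>
            (\<forall>l. admissible t k l \<longrightarrow> c_val t l \<le> f_val k vs)
          \<and> (\<exists>l. admissible t k l \<and> c_val t l = f_val k vs)
          \<and> f_val k vs \<le> real k - sqrt (2 * real k)
          \<and> (sqrt (2 * real k) \<in> \<nat> \<longrightarrow> f_val k vs = real k - sqrt (2 * real k)))"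
proof -
  have "2 \<le> t"
    using assms by simp
  then obtain v0 where v0: "f_maximizer t k v0"
    by (rule f_maximizer_exists)
  have maximal_iff: "(\<forall>l'. admissible t k l' \<longrightarrow> c_val t l' \<le> c_val t l) \<longleftrightarrow> c_val t l = f_val k v0"
    if "admissible t k l" for l
    using c_val_le_max_f_val[OF assms v0] exists_c_val_eq_max_f_val[OF assms v0] that
    by (metis order.antisym)
  have extremal: "(\<forall>l. admissible t k l \<longrightarrow> c_val t l \<le> f_val k vs)
      \<and> (\<exists>l. admissible t k l \<and> c_val t l = f_val k vs)
      \<and> f_val k vs \<le> real k - sqrt (2 * real k)
      \<and> (sqrt (2 * real k) \<in> \<nat> \<longrightarrow> f_val k vs = real k - sqrt (2 * real k))"
    if "vs \<in> {2..t}" "\<forall>v\<in>{2..t}. f_val k v \<le> f_val k vs" for vs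
  proof -
    have vs: "f_maximizer t k vs"
      using that unfolding f_maximizer_def by simp
    show ?thesis
      using c_val_le_max_f_val[OF assms vs] exists_c_val_eq_max_f_val[OF assms vs]
        f_val_le_sqrt_bound[of k vs] f_maximizer_at_sqrt[OF assms vs] that(1) assms(1) by auto
  qed
  show ?thesis
    using maximal_iff c_val_eq_max_f_val_iff[OF assms v0] extremal unfolding Let_def by simp
qed

end
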